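(* Let $P$ be a polynomial with integer coefficients and let $L$ be the differential operator $L=2\pi i\, P\!\left(\frac{1}{2\pi i}\frac{\partial}{\partial x}\right)$. Consider the initial value problem $L U(t,x)=U_t(t,x)$ with $U(0,x)=f(x)$, where $f$ is in class $\mathcal{D}$ (i.e. $f$ is integrable, periodic of period $1$, piecewise continuously differentiable, and $f(x)=\tfrac12\{f(x^+)+f(x^-)\}$ for all $x$), and where $U(t,x)$ is the solution given by the Fourier series $\sum_k c_k\, e(tP(k)+kx)$, $c_k$ being the Fourier coefficients of $f$ (with partial sums taken symmetrically, $\lim_{K\to\infty}\sum_{|k|\le K}$). Denote $$G(u,v;q)=\sum_{w \,(\mathrm{mod}\ q)} e_q\big(uP(w)-vw\big).$$ Then at the rational time $t=u/q$ (a reduced fraction) this series converges and $$U(t,x)=\frac{1}{q}\sum_{v\,(\mathrm{mod}\ q)} G(u,v;q)\, f\!\left(x+\frac{v}{q}\right).$$ Consequently, if $U(0,x)$ is piecewise constant, then $U(t,x)$ is piecewise constant in $x$ at all rational times $t$.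
   Context: Notation: $e(\xi)=e^{2\pi i\xi}$ and $e_q(\xi)=e(\xi/q)=e^{2\pi i\xi/q}$. Functions of class $\mathcal{D}$ have Fourier series converging pointwise to $f$ in the sense $f(x)=\lim_{K\to\infty}\sum_{|k|\le K}c_k e(kx)$. The Fourier modes $e(tP(k)+kx)$ solve $LU=U_t$, so $\sum_k c_k e(tP(k)+kx)$ is the $L^2$ (weak) solution of the initial value problem. *)

theory Defs
  imports "HOL-Analysis.Analysis" "HOL-Computational_Algebra.Polynomial"
begin

definition e :: "real \<Rightarrow> complex" where
  "e \<xi> = exp (2 * of_real pi * \<i> * of_real \<xi>)"

definition piecewise_C1_period :: "(real \<Rightarrow> complex) \<Rightarrow> bool" where
  "piecewise_C1_period f \<longleftrightarrow>
     (\<exists>(a::nat \<Rightarrow> real) n. a 0 = 0 \<and> a n = 1 \<and> (\<forall>i<n. a i < a (Suc i)) \<and>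
        (\<forall>i<n. \<exists>g. g C1_differentiable_on {a i..a (Suc i)} \<and>
                   (\<forall>x\<in>{a i<..<a (Suc i)}. f x = g x)))"

definition classD :: "(real \<Rightarrow> complex) \<Rightarrow> bool" where
  "classD f \<longleftrightarrow>
     f integrable_on {0..1} \<and>
     (\<forall>x. f (x + 1) = f x) \<and>
     piecewise_C1_period f \<and>
     (\<forall>x. \<exists>l r. (f \<longlongrightarrow> l) (at_left x) \<and> (f \<longlongrightarrow> r) (at_right x) \<and> f x = (l + r) / 2)"

definition fourier_coeff :: "(real \<Rightarrow> complex) \<Rightarrow> int \<Rightarrow> complex" where
  "fourier_coeff f k = integral {0..1} (\<lambda>x. f x * e (- (of_int k * x)))"

definition U_partial :: "int poly \<Rightarrow> (real \<Rightarrow> complex) \<Rightarrow> real \<Rightarrow> real \<Rightarrow> nat \<Rightarrow> complex" where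
  "U_partial P f t x K =
     (\<Sum>k = - int K..int K. fourier_coeff f k * e (t * of_int (poly P k) + of_int k * x))"

definition U :: "int poly \<Rightarrow> (real \<Rightarrow> complex) \<Rightarrow> real \<Rightarrow> real \<Rightarrow> complex" where
  "U P f t x = lim (U_partial P f t x)"

definition G :: "int poly \<Rightarrow> int \<Rightarrow> int \<Rightarrow> nat \<Rightarrow> complex" where
  "G P u v q = (\<Sum>w\<in>{0..<int q}. e (of_int (u * poly P w - v * w) / of_nat q))"

definition piecewise_constant :: "(real \<Rightarrow> complex) \<Rightarrow> bool" where
  "piecewise_constant g \<longleftrightarrow>
     (\<forall>a b. \<exists>S. finite S \<and>
        (\<forall>x y. a \<le> x \<and> x \<le> y \<and> y \<le> b \<and> {x..y} \<inter> S = {} \<longrightarrow> g x = g y))"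

end

theory Submission
  imports Defs
begin

text \<open>At a rational time \<open>t = u/q\<close> the multiplier \<open>e(t P(k))\<close> depends only on \<open>k mod q\<close>, because
  \<open>P\<close> has integer coefficients, and finite Fourier inversion on \<open>\<int>/q\<close> writes it as
  \<open>(1/q) \<Sum>\<^sub>v G(u,v;q) e(kv/q)\<close>. The partial sums of \<open>U(t,x)\<close> are therefore a fixed finite
  combination of the partial Fourier sums of \<open>f\<close> at the points \<open>x + v/q\<close>, and these converge to
  \<open>f(x + v/q)\<close> by Dirichlet's theorem. For the latter, the partial sum minus \<open>f(x)\<close> is the integral
  of the Dirichlet kernel \<open>sin((2K+1)\<pi>t) / sin(\<pi>t)\<close> against \<open>f(x+t)\<close> minus the appropriate
  one-sided limit; since a class \<open>\<D>\<close> function is Lipschitz up to its one-sided limits, this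
  difference stays bounded after division by \<open>sin(\<pi>t)\<close>, and the Riemann-Lebesgue lemma (a
  consequence of Bessel's inequality) finishes the proof.
  Finally \<open>U(0,\<cdot>) = f\<close>, and piecewise constancy is preserved by shifts and linear combinations.\<close>

lemma e_cis: "e x = cis (2 * pi * x)"
  unfolding e_def cis_conv_exp by (simp add: algebra_simps)

lemma e_add: "e (a + b) = e a * e b"
  by (simp add: e_cis distrib_left cis_mult)

lemma e_zero [simp]: "e 0 = 1"
  by (simp add: e_cis)

lemma e_of_int [simp]: "e (of_int n) = 1"
  by (simp add: e_cis)

lemma e_add_of_int: "e (x + of_int n) = e x"
  by (simp add: e_add)

lemma cnj_e: "cnj (e x) = e (- x)"
  unfolding e_cis using cis_cnj[of "2 * pi * x"] by simp

lemma e_of_nat_mult: "e (of_nat m * x) = e x ^ m"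
proof -
  have "e x ^ m = cis (real m * (2 * pi * x))" unfolding e_cis by (rule Complex.DeMoivre)
  then show ?thesis by (simp add: e_cis algebra_simps)
qed

lemma e_add_e_uminus: "e x + e (- x) = of_real (2 * cos (2 * pi * x))"
  by (simp add: e_cis complex_eq_iff)

lemma e_diff_e_uminus: "e x - e (- x) = 2 * \<i> * of_real (sin (2 * pi * x))"
  by (simp add: e_cis complex_eq_iff)

lemma e_eq_1_iff: "e x = 1 \<longleftrightarrow> x \<in> \<int>"
proof
  assume "e x = 1"
  then obtain n :: int where "Im (2 * of_real pi * \<i> * of_real x) = of_int (2 * n) * pi"
    by (auto simp: e_def exp_eq_1)
  then have "x = of_int n" by simp
  then show "x \<in> \<int>" by simp
qed (auto elim: Ints_cases)

lemma has_vector_derivative_e_mult: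
  "((\<lambda>t. e (c * t)) has_vector_derivative (2 * of_real pi * \<i> * of_real c * e (c * t))) (at t within S)"
proof -
  have "((\<lambda>z. exp (2 * of_real pi * \<i> * of_real c * z)) has_field_derivative
          (2 * of_real pi * \<i> * of_real c * exp (2 * of_real pi * \<i> * of_real c * of_real t))) (at (of_real t))"
    by (auto intro!: derivative_eq_intros)
  from has_vector_derivative_real_field[OF this] show ?thesis
    unfolding e_def by (auto simp: algebra_simps intro: has_vector_derivative_at_within)
qed

lemma continuous_on_e_mult: "continuous_on S (\<lambda>t. e (c * t))"
  unfolding e_def by (intro continuous_intros)

section \<open>The Dirichlet kernel\<close>

definition dirichlet_kernel :: "nat \<Rightarrow> real \<Rightarrow> complex" where
  "dirichlet_kernel K t = (\<Sum>k = - int K..int K. e (- (of_int k * t)))"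

definition dirichlet_cos_sum :: "nat \<Rightarrow> real \<Rightarrow> real" where
  "dirichlet_cos_sum K t = 1 + (\<Sum>k = 1..K. 2 * cos (2 * pi * real k * t))"

lemma sum_symmetric_int_Suc:
  "(\<Sum>k = - int (Suc K)..int (Suc K). g k) = (\<Sum>k = - int K..int K. g k) + g (int K + 1) + g (- (int K + 1))"
proof -
  have "{- int (Suc K)..int (Suc K)} = insert (int K + 1) (insert (- (int K + 1)) {- int K..int K})"
    by auto
  then show ?thesis by (simp add: algebra_simps)
qed

lemma dirichlet_kernel_eq_cos_sum: "dirichlet_kernel K t = of_real (dirichlet_cos_sum K t)"
proof (induction K)
  case 0
  then show ?case by (simp add: dirichlet_kernel_def dirichlet_cos_sum_def)
next
  case (Suc K)
  have "dirichlet_kernel (Suc K) t = dirichlet_kernel K t + (e (- ((int K + 1) * t)) + e (- (- ((int K + 1) * t))))"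
    unfolding dirichlet_kernel_def sum_symmetric_int_Suc by (simp add: algebra_simps)
  also have "\<dots> = of_real (dirichlet_cos_sum K t + 2 * cos (2 * pi * (- ((int K + 1) * t))))"
    unfolding e_add_e_uminus Suc by simp
  also have "cos (2 * pi * (- ((int K + 1) * t))) = cos (2 * pi * real (Suc K) * t)"
    using cos_minus[of "2 * pi * real (Suc K) * t"] by (simp add: algebra_simps)
  finally show ?case by (simp add: dirichlet_cos_sum_def)
qed

lemma dirichlet_cos_sum_mult_sin:
  "dirichlet_cos_sum K t * sin (pi * t) = sin ((2 * real K + 1) * pi * t)"
proof (induction K)
  case 0
  then show ?case by (simp add: dirichlet_cos_sum_def)
next
  case (Suc K)
  have product_to_sum: "2 * cos a * sin b = sin (a + b) - sin (a - b)" for a b :: real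
    by (simp add: sin_add sin_diff)
  have "dirichlet_cos_sum (Suc K) t * sin (pi * t)
      = dirichlet_cos_sum K t * sin (pi * t) + 2 * cos (2 * pi * real (Suc K) * t) * sin (pi * t)"
    by (simp add: dirichlet_cos_sum_def algebra_simps)
  also have "\<dots> = sin ((2 * real (Suc K) + 1) * pi * t)"
    unfolding Suc product_to_sum by (simp add: algebra_simps)
  finally show ?case .
qed

lemma dirichlet_kernel_mult_sin:
  "of_real (sin (pi * t)) * dirichlet_kernel K t = (e ((real K + 1/2) * t) - e (- ((real K + 1/2) * t))) / (2 * \<i>)"
proof -
  have "sin (2 * pi * ((real K + 1/2) * t)) = dirichlet_cos_sum K t * sin (pi * t)"
    unfolding dirichlet_cos_sum_mult_sin by (simp add: algebra_simps)
  then show ?thesis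
    unfolding e_diff_e_uminus dirichlet_kernel_eq_cos_sum by (simp add: mult.commute)
qed

lemma dirichlet_cos_sum_has_integral_halves:
  "(dirichlet_cos_sum K has_integral 1/2) {0..1/2}"
  "(dirichlet_cos_sum K has_integral 1/2) {1/2..1}"
proof -
  define F where "F t = t + (\<Sum>k = 1..K. sin (2 * pi * real k * t) / (pi * real k))" for t
  have "(F has_real_derivative dirichlet_cos_sum K t) (at t)" for t
    unfolding F_def dirichlet_cos_sum_def by (auto intro!: derivative_eq_intros sum.cong)
  then have FTC: "(dirichlet_cos_sum K has_integral F b - F a) {a..b}" if "a \<le> b" for a b
    using that by (intro fundamental_theorem_of_calculus)
      (auto simp: has_real_derivative_iff_has_vector_derivative intro: has_vector_derivative_at_within)
  have F_half_integer: "F (real m / 2) = real m / 2" for m :: nat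
  proof -
    have "sin (2 * pi * real k * (real m / 2)) = 0" for k :: nat
      using sin_npi[of "k * m"] by (simp add: algebra_simps)
    then show ?thesis by (simp add: F_def)
  qed
  have F_values: "F 0 = 0" "F (1/2) = 1/2" "F 1 = 1"
    using F_half_integer[of 0] F_half_integer[of 1] F_half_integer[of 2] by simp_all
  show "(dirichlet_cos_sum K has_integral 1/2) {0..1/2}" "(dirichlet_cos_sum K has_integral 1/2) {1/2..1}"
    using FTC[of 0 "1/2"] FTC[of "1/2" 1] unfolding F_values by simp_all
qed

lemma periodic_add_of_int:
  assumes "\<And>x. h (x + 1) = h x"
  shows "h (x + of_int n) = h x"
proof (induction n rule: int_induct[where k = 0])
  case (step1 i)
  then show ?case using assms[of "x + of_int i"] by (simp add: add.assoc)
next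
  case (step2 i)
  then show ?case using assms[of "x + of_int (i - 1)"] by simp
qed simp

lemma periodic_has_integral_unit_interval:
  fixes h :: "real \<Rightarrow> 'a::banach"
  assumes periodic: "\<And>x. h (x + 1) = h x" and int: "h integrable_on {0..1}"
  shows "(h has_integral integral {0..1} h) {a..a+1}"
proof -
  define b where "b = a - of_int \<lfloor>a\<rfloor>"
  have b: "0 \<le> b" "b < 1" unfolding b_def by linarith+
  have int_b1: "h integrable_on {b..1}" and int_0b: "h integrable_on {0..b}"
    using int b by (auto intro: integrable_subinterval_real)
  have "((\<lambda>x. h (x + -1)) has_integral integral {0..b} h) {1..b+1}"
    using has_integral_shift_real_ivl[OF integrable_integral[OF int_0b], of "-1"] by simp
  moreover have "h (x + -1) = h x" for x
    using periodic[of "x - 1"] by simp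
  ultimately have shifted: "(h has_integral integral {0..b} h) {1..b+1}" by simp
  have "(h has_integral integral {b..1} h + integral {0..b} h) {b..b+1}"
    by (rule has_integral_combine[OF _ _ integrable_integral[OF int_b1] shifted]) (use b in auto)
  moreover have "integral {0..b} h + integral {b..1} h = integral {0..1} h"
    using Henstock_Kurzweil_Integration.integral_combine[OF b(1) _ int] b by simp
  ultimately have "(h has_integral integral {0..1} h) {b..b+1}"
    by (simp add: add.commute)
  from has_integral_shift_real_ivl[OF this, of "- of_int \<lfloor>a\<rfloor>"]
  have "((\<lambda>x. h (x + of_int (- \<lfloor>a\<rfloor>))) has_integral integral {0..1} h) {a..a+1}"
    by (simp add: b_def)
  then show ?thesis by (simp only: periodic_add_of_int[where h = h, OF periodic])
qed

lemma has_integral_e_int_mult: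
  "((\<lambda>t. e (of_int m * t)) has_integral (if m = 0 then 1 else 0)) {0..1}"
proof (cases "m = 0")
  case True
  then show ?thesis using has_integral_const_real[of "1::complex" 0 1] by simp
next
  case False
  define c :: complex where "c = 2 * of_real pi * \<i> * of_real (of_int m)"
  have c: "c \<noteq> 0" using False by (simp add: c_def)
  have "((\<lambda>t. e (of_int m * t) * inverse c) has_vector_derivative e (of_int m * t)) (at t within {0..1})" for t
  proof -
    have "((\<lambda>t. e (of_int m * t) * inverse c) has_vector_derivative (c * e (of_int m * t)) * inverse c)
        (at t within {0..1})"
      unfolding c_def by (intro has_vector_derivative_mult_left has_vector_derivative_e_mult)
    then show ?thesis using c by (simp add: field_simps)
  qed
  from fundamental_theorem_of_calculus[OF _ this]
  have "((\<lambda>t. e (of_int m * t)) has_integral (e (of_int m) * inverse c - inverse c)) {0..1}"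
    by simp
  then show ?thesis using False by simp
qed

section \<open>Bounded measurable functions and the Riemann-Lebesgue lemma\<close>

definition bounded_measurable_on :: "real set \<Rightarrow> (real \<Rightarrow> complex) \<Rightarrow> bool" where
  "bounded_measurable_on S f \<longleftrightarrow> f measurable_on S \<and> bounded (f ` S)"

lemma bounded_measurable_onE:
  assumes "bounded_measurable_on S f"
  obtains B where "f measurable_on S" "\<And>x. x \<in> S \<Longrightarrow> norm (f x) \<le> B"
  using assms unfolding bounded_measurable_on_def bounded_iff by blast

lemma bounded_measurable_onI:
  assumes "f measurable_on S" "\<And>x. x \<in> S \<Longrightarrow> norm (f x) \<le> B"
  shows "bounded_measurable_on S f"
  using assms unfolding bounded_measurable_on_def bounded_iff by blast

lemma bounded_measurable_on_mult:
  assumes "bounded_measurable_on S f" "bounded_measurable_on S g"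
  shows "bounded_measurable_on S (\<lambda>x. f x * g x)"
proof -
  obtain B where f: "f measurable_on S" "\<And>x. x \<in> S \<Longrightarrow> norm (f x) \<le> B"
    using assms(1) by (rule bounded_measurable_onE) blast
  obtain C where g: "g measurable_on S" "\<And>x. x \<in> S \<Longrightarrow> norm (g x) \<le> C"
    using assms(2) by (rule bounded_measurable_onE) blast
  show ?thesis
  proof (rule bounded_measurable_onI)
    show "(\<lambda>x. f x * g x) measurable_on S"
      using measurable_on_bilinear[OF bilinear_times f(1) g(1)] .
    show "norm (f x * g x) \<le> B * C" if "x \<in> S" for x
      unfolding norm_mult
      by (rule mult_mono)
        (use f(2)[OF that] g(2)[OF that] norm_ge_zero[of "f x"] norm_ge_zero[of "g x"] in linarith)+
  qed
qed

lemma bounded_measurable_on_add: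
  assumes "bounded_measurable_on S f" "bounded_measurable_on S g"
  shows "bounded_measurable_on S (\<lambda>x. f x + g x)"
proof -
  obtain B where f: "f measurable_on S" "\<And>x. x \<in> S \<Longrightarrow> norm (f x) \<le> B"
    using assms(1) by (rule bounded_measurable_onE) blast
  obtain C where g: "g measurable_on S" "\<And>x. x \<in> S \<Longrightarrow> norm (g x) \<le> C"
    using assms(2) by (rule bounded_measurable_onE) blast
  show ?thesis
  proof (rule bounded_measurable_onI)
    show "(\<lambda>x. f x + g x) measurable_on S" using measurable_on_add f(1) g(1) .
    show "norm (f x + g x) \<le> B + C" if "x \<in> S" for x
      using norm_triangle_ineq[of "f x" "g x"] f(2)[OF that] g(2)[OF that] by linarith
  qed
qed

lemma bounded_measurable_on_cnj:
  assumes "bounded_measurable_on S f"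
  shows "bounded_measurable_on S (\<lambda>x. cnj (f x))"
proof -
  obtain B where f: "f measurable_on S" "\<And>x. x \<in> S \<Longrightarrow> norm (f x) \<le> B"
    using assms by (rule bounded_measurable_onE) blast
  have "(cnj \<circ> f) measurable_on S"
    by (rule measurable_on_compose_continuous_0[OF f(1)]) (auto intro: continuous_on_cnj continuous_on_id)
  then show ?thesis
    using f(2) by (intro bounded_measurable_onI[where B = B]) (auto simp: o_def)
qed

lemma bounded_measurable_on_continuous:
  assumes "compact S" "continuous_on S f"
  shows "bounded_measurable_on S f"
proof -
  have S: "S \<in> sets lebesgue" using lmeasurable_compact[OF assms(1)] by (rule fmeasurableD)
  have "f measurable_on S"
    using continuous_imp_measurable_on_sets_lebesgue[OF assms(2) S] S
    by (simp add: measurable_on_iff_borel_measurable)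
  moreover have "bounded (f ` S)"
    using assms by (intro compact_imp_bounded compact_continuous_image)
  ultimately show ?thesis by (simp add: bounded_measurable_on_def)
qed

lemma bounded_measurable_on_e_mult: "bounded_measurable_on {0..1} (\<lambda>t. e (c * t))"
  by (intro bounded_measurable_on_continuous continuous_on_e_mult) simp

definition l2_inner :: "real set \<Rightarrow> (real \<Rightarrow> complex) \<Rightarrow> (real \<Rightarrow> complex) \<Rightarrow> complex" where
  "l2_inner S f g = integral S (\<lambda>t. f t * cnj (g t))"

lemma l2_inner_commute: "l2_inner S g f = cnj (l2_inner S f g)"
  unfolding l2_inner_def integral_cnj by (simp add: mult.commute)

context
  fixes S :: "real set"
  assumes S: "S \<in> lmeasurable"
begin

lemma bounded_measurable_on_integrable:
  assumes "bounded_measurable_on S f"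
  shows "f integrable_on S"
proof -
  obtain B where f: "f measurable_on S" "\<And>x. x \<in> S \<Longrightarrow> norm (f x) \<le> B"
    using assms by (rule bounded_measurable_onE) blast
  have "f absolutely_integrable_on S"
    by (rule measurable_bounded_by_integrable_imp_absolutely_integrable[where g = "\<lambda>x. B"])
      (use f S in \<open>auto simp: measurable_on_iff_borel_measurable fmeasurableD integrable_on_const\<close>)
  then show ?thesis using absolutely_integrable_on_def by blast
qed

lemma bounded_measurable_on_const: "bounded_measurable_on S (\<lambda>x. c)"
  using S by (intro bounded_measurable_onI[where B = "norm c"]) (auto simp: fmeasurableD)

lemma bounded_measurable_on_diff:
  assumes "bounded_measurable_on S f" "bounded_measurable_on S g"
  shows "bounded_measurable_on S (\<lambda>x. f x - g x)"
  using bounded_measurable_on_add[OF assms(1) bounded_measurable_on_mult[OF bounded_measurable_on_const assms(2)], of "-1"]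
  by simp

lemma bounded_measurable_on_sum:
  assumes "\<And>i. i \<in> A \<Longrightarrow> bounded_measurable_on S (g i)"
  shows "bounded_measurable_on S (\<lambda>x. \<Sum>i\<in>A. g i x)"
  using assms
  by (induction A rule: infinite_finite_induct) (simp_all add: bounded_measurable_on_const bounded_measurable_on_add)

lemma l2_inner_integrable:
  "bounded_measurable_on S f \<Longrightarrow> bounded_measurable_on S g \<Longrightarrow> (\<lambda>t. f t * cnj (g t)) integrable_on S"
  by (intro bounded_measurable_on_integrable bounded_measurable_on_mult bounded_measurable_on_cnj)

lemma l2_inner_diff_left:
  "bounded_measurable_on S f \<Longrightarrow> bounded_measurable_on S g \<Longrightarrow> bounded_measurable_on S h \<Longrightarrow>
    l2_inner S (\<lambda>t. f t - g t) h = l2_inner S f h - l2_inner S g h"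
  unfolding l2_inner_def by (simp add: left_diff_distrib integral_diff l2_inner_integrable)

lemma l2_inner_diff_right:
  "bounded_measurable_on S f \<Longrightarrow> bounded_measurable_on S g \<Longrightarrow> bounded_measurable_on S h \<Longrightarrow>
    l2_inner S f (\<lambda>t. g t - h t) = l2_inner S f g - l2_inner S f h"
  unfolding l2_inner_def by (simp add: right_diff_distrib integral_diff l2_inner_integrable)

lemma l2_inner_sum_left:
  assumes "finite A" "\<And>n. n \<in> A \<Longrightarrow> bounded_measurable_on S (u n)" "bounded_measurable_on S h"
  shows "l2_inner S (\<lambda>t. \<Sum>n\<in>A. a n * u n t) h = (\<Sum>n\<in>A. a n * l2_inner S (u n) h)"
proof -
  have "l2_inner S (\<lambda>t. \<Sum>n\<in>A. a n * u n t) h = integral S (\<lambda>t. \<Sum>n\<in>A. a n * (u n t * cnj (h t)))"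
    unfolding l2_inner_def by (simp add: sum_distrib_right mult.assoc)
  also have "\<dots> = (\<Sum>n\<in>A. integral S (\<lambda>t. a n * (u n t * cnj (h t))))"
    by (rule integral_sum) (use assms in \<open>auto intro!: integrable_on_mult_right l2_inner_integrable\<close>)
  also have "\<dots> = (\<Sum>n\<in>A. a n * l2_inner S (u n) h)"
    unfolding l2_inner_def by (intro sum.cong refl integral_mult_right)
  finally show ?thesis .
qed

lemma l2_inner_sum_right:
  assumes "finite A" "\<And>n. n \<in> A \<Longrightarrow> bounded_measurable_on S (u n)" "bounded_measurable_on S h"
  shows "l2_inner S h (\<lambda>t. \<Sum>n\<in>A. a n * u n t) = (\<Sum>n\<in>A. cnj (a n) * l2_inner S h (u n))"
  by (subst (1 2) l2_inner_commute) (simp add: l2_inner_sum_left[OF assms])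

lemma l2_inner_self_Re_nonneg:
  assumes "bounded_measurable_on S g"
  shows "0 \<le> Re (l2_inner S g g)"
proof -
  have "((\<lambda>t. g t * cnj (g t)) has_integral l2_inner S g g) S"
    unfolding l2_inner_def using l2_inner_integrable[OF assms assms] by (rule integrable_integral)
  from has_integral_Re[OF this] show ?thesis
    by (rule has_integral_nonneg) (simp add: complex_mult_cnj)
qed

lemma bessel_inequality:
  assumes A: "finite A" and X: "bounded_measurable_on S X"
    and b: "\<And>n. n \<in> A \<Longrightarrow> bounded_measurable_on S (b n)"
    and orthonormal: "\<And>n m. n \<in> A \<Longrightarrow> m \<in> A \<Longrightarrow> l2_inner S (b n) (b m) = (if n = m then 1 else 0)"
  shows "(\<Sum>n\<in>A. (cmod (l2_inner S X (b n)))\<^sup>2) \<le> Re (l2_inner S X X)"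
proof -
  define c where "c n = l2_inner S X (b n)" for n
  define \<Sigma> where "\<Sigma> = (\<Sum>n\<in>A. (cmod (c n))\<^sup>2)"
  define Y where "Y t = (\<Sum>n\<in>A. c n * b n t)" for t
  have Y_eq: "(\<lambda>t. \<Sum>n\<in>A. c n * b n t) = Y" by (simp add: Y_def fun_eq_iff)
  have Y: "bounded_measurable_on S Y"
    unfolding Y_def using b by (intro bounded_measurable_on_sum bounded_measurable_on_mult bounded_measurable_on_const)
  have c_norm: "(\<Sum>n\<in>A. c n * cnj (c n)) = of_real \<Sigma>"
    unfolding \<Sigma>_def of_real_sum complex_norm_square ..
  have XY: "l2_inner S X Y = of_real \<Sigma>"
    using l2_inner_sum_right[of A b X c, OF A b X] unfolding Y_eq c_norm[symmetric]
    by (simp add: c_def mult.commute)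
  have bY: "l2_inner S (b n) Y = cnj (c n)" if "n \<in> A" for n
    using l2_inner_sum_right[of A b "b n" c, OF A b b[OF that]] that A unfolding Y_eq
    by (simp add: orthonormal if_distrib cong: if_cong)
  have YY: "l2_inner S Y Y = of_real \<Sigma>"
    using l2_inner_sum_left[of A b Y c, OF A b Y] unfolding Y_eq c_norm[symmetric]
    by (simp add: bY)
  have "l2_inner S (\<lambda>t. X t - Y t) (\<lambda>t. X t - Y t) = l2_inner S X X - of_real \<Sigma>"
    using X Y bounded_measurable_on_diff[OF X Y]
    by (simp add: l2_inner_diff_left l2_inner_diff_right l2_inner_commute[of S Y X] XY YY)
  with l2_inner_self_Re_nonneg[OF bounded_measurable_on_diff[OF X Y]] show ?thesis
    by (simp add: \<Sigma>_def c_def)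
qed

end

lemma riemann_lebesgue_e:
  assumes X: "bounded_measurable_on {0..1} X" and "s \<noteq> 0"
  shows "(\<lambda>n. integral {0..1} (\<lambda>t. X t * e (of_int s * real n * t))) \<longlonglongrightarrow> 0"
proof -
  define b where "b n t = e (- (of_int s * real n) * t)" for n :: nat and t
  define c where "c n = l2_inner {0..1} X (b n)" for n
  have b: "bounded_measurable_on {0..1} (b n)" for n
    unfolding b_def by (rule bounded_measurable_on_e_mult)
  have orthonormal: "l2_inner {0..1} (b n) (b m) = (if n = m then 1 else 0)" for n m
  proof -
    have "l2_inner {0..1} (b n) (b m) = integral {0..1} (\<lambda>t. e (of_int (s * (int m - int n)) * t))"
      unfolding l2_inner_def b_def cnj_e
      by (intro integral_cong) (simp add: e_add[symmetric] algebra_simps)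
    then show ?thesis
      using integral_unique[OF has_integral_e_int_mult[of "s * (int m - int n)"]] assms(2) by auto
  qed
  have bessel: "(\<Sum>n<N. (cmod (c n))\<^sup>2) \<le> Re (l2_inner {0..1} X X)" for N
    unfolding c_def by (rule bessel_inequality[OF _ _ X b orthonormal]) simp_all
  have "summable (\<lambda>n. (cmod (c n))\<^sup>2)"
    by (rule summableI_nonneg_bounded[OF _ bessel]) simp
  then have "(\<lambda>n. sqrt ((cmod (c n))\<^sup>2)) \<longlonglongrightarrow> sqrt 0"
    by (intro tendsto_real_sqrt summable_LIMSEQ_zero)
  then have "(\<lambda>n. norm (c n)) \<longlonglongrightarrow> 0" by simp
  then have "c \<longlonglongrightarrow> 0" by (rule tendsto_norm_zero_cancel)
  moreover have "c = (\<lambda>n. integral {0..1} (\<lambda>t. X t * e (of_int s * real n * t)))"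
    unfolding c_def l2_inner_def b_def cnj_e by (simp add: fun_eq_iff)
  ultimately show ?thesis by simp
qed

section \<open>One-sided behaviour of piecewise smooth periodic functions\<close>

lemma norm_diff_le_of_vector_derivative_bound:
  fixes g :: "real \<Rightarrow> 'a::real_normed_vector"
  assumes der: "\<And>x. x \<in> {p..q} \<Longrightarrow> (g has_vector_derivative D x) (at x)"
    and bound: "\<And>x. x \<in> {p..q} \<Longrightarrow> norm (D x) \<le> C"
    and "x \<in> {p..q}" "y \<in> {p..q}"
  shows "norm (g x - g y) \<le> C * \<bar>x - y\<bar>"
proof -
  have "norm (g x - g y) \<le> C * norm (x - y)"
  proof (rule differentiable_bound[where f' = "\<lambda>x h. h *\<^sub>R D x"])
    fix u assume u: "u \<in> {p..q}"
    show "(g has_derivative (\<lambda>h. h *\<^sub>R D u)) (at u within {p..q})"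
      using has_vector_derivative_at_within[OF der[OF u]] by (simp add: has_vector_derivative_def)
    have "onorm (\<lambda>h::real. h *\<^sub>R D u) = onorm (\<lambda>h::real. h) * norm (D u)"
      by (rule onorm_scaleR_left) (rule bounded_linear_ident)
    also have "\<dots> \<le> 1 * norm (D u)"
      by (rule mult_right_mono[OF onorm_id_le]) simp
    also have "\<dots> \<le> C" using bound[OF u] by simp
    finally show "onorm (\<lambda>h. h *\<^sub>R D u) \<le> C" .
  qed (use assms in auto)
  then show ?thesis by simp
qed

lemma C1_differentiable_on_intervalE:
  fixes g :: "real \<Rightarrow> 'a::real_normed_vector"
  assumes "g C1_differentiable_on {p..q}"
  obtains B C where "\<And>x. x \<in> {p..q} \<Longrightarrow> norm (g x) \<le> B"
    "\<And>x y. x \<in> {p..q} \<Longrightarrow> y \<in> {p..q} \<Longrightarrow> norm (g x - g y) \<le> C * \<bar>x - y\<bar>"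
proof -
  obtain D where der: "\<And>x. x \<in> {p..q} \<Longrightarrow> (g has_vector_derivative D x) (at x)"
    and D: "continuous_on {p..q} D"
    using assms unfolding C1_differentiable_on_def by blast
  have g: "continuous_on {p..q} g"
    by (rule continuous_on_vector_derivative) (use der has_vector_derivative_at_within in blast)
  obtain B where B: "\<And>x. x \<in> {p..q} \<Longrightarrow> norm (g x) \<le> B"
    using compact_imp_bounded[OF compact_continuous_image[OF g compact_Icc]] unfolding bounded_iff by blast
  obtain C where C: "\<And>x. x \<in> {p..q} \<Longrightarrow> norm (D x) \<le> C"
    using compact_imp_bounded[OF compact_continuous_image[OF D compact_Icc]] unfolding bounded_iff by blast
  show ?thesis
    using B norm_diff_le_of_vector_derivative_bound[OF der C] by (rule that)
qed

lemma piecewise_C1_periodE: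
  assumes "piecewise_C1_period f"
  obtains a :: "nat \<Rightarrow> real" and n G B C where "a 0 = 0" "a n = 1"
    "\<And>i x. i < n \<Longrightarrow> x \<in> {a i<..<a (Suc i)} \<Longrightarrow> f x = G i x"
    "\<And>i x. i < n \<Longrightarrow> x \<in> {a i..a (Suc i)} \<Longrightarrow> norm (G i x) \<le> B"
    "\<And>i x y. i < n \<Longrightarrow> x \<in> {a i..a (Suc i)} \<Longrightarrow> y \<in> {a i..a (Suc i)} \<Longrightarrow>
      norm (G i x - G i y) \<le> C * \<bar>x - y\<bar>"
proof -
  obtain a n where a: "a 0 = 0" "a n = 1"
    and pieces: "\<forall>i<n. \<exists>g. g C1_differentiable_on {a i..a (Suc i)} \<and> (\<forall>x\<in>{a i<..<a (Suc i)}. f x = g x)"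
    using assms unfolding piecewise_C1_period_def by blast
  have "\<exists>g Bi Ci. (\<forall>x\<in>{a i<..<a (Suc i)}. f x = g x) \<and>
      (\<forall>x\<in>{a i..a (Suc i)}. norm (g x) \<le> Bi) \<and>
      (\<forall>x\<in>{a i..a (Suc i)}. \<forall>y\<in>{a i..a (Suc i)}. norm (g x - g y) \<le> Ci * \<bar>x - y\<bar>)"
    if i: "i < n" for i
  proof -
    obtain g where "g C1_differentiable_on {a i..a (Suc i)}" "\<forall>x\<in>{a i<..<a (Suc i)}. f x = g x"
      using pieces i by blast
    then show ?thesis by (elim C1_differentiable_on_intervalE) blast
  qed
  then obtain G Bs Cs where G: "\<And>i. i < n \<Longrightarrow> (\<forall>x\<in>{a i<..<a (Suc i)}. f x = G i x) \<and>
      (\<forall>x\<in>{a i..a (Suc i)}. norm (G i x) \<le> Bs i) \<and>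
      (\<forall>x\<in>{a i..a (Suc i)}. \<forall>y\<in>{a i..a (Suc i)}. norm (G i x - G i y) \<le> Cs i * \<bar>x - y\<bar>)"
    by metis
  have le_sum: "h i \<le> (\<Sum>j<n. \<bar>h j\<bar>)" if "i < n" for h :: "nat \<Rightarrow> real" and i
    using member_le_sum[of i "{..<n}" "\<lambda>j. \<bar>h j\<bar>"] that by simp
  show ?thesis
  proof (rule that[OF a, of G "\<Sum>j<n. \<bar>Bs j\<bar>" "\<Sum>j<n. \<bar>Cs j\<bar>"])
    show "norm (G i x - G i y) \<le> (\<Sum>j<n. \<bar>Cs j\<bar>) * \<bar>x - y\<bar>"
      if "i < n" "x \<in> {a i..a (Suc i)}" "y \<in> {a i..a (Suc i)}" for i x y
      using G[OF that(1)] that le_sum[OF that(1), of Cs] by (meson abs_ge_zero mult_right_mono order_trans)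
  qed (use G le_sum in \<open>blast intro: order_trans\<close>)+
qed

lemma interval_index_right:
  "a 0 \<le> (z::real) \<Longrightarrow> z < a n \<Longrightarrow> \<exists>i<n. a i \<le> z \<and> z < a (Suc i)"
  by (induction n) (auto, metis less_Suc_eq not_less)

lemma interval_index_left:
  "a 0 < (z::real) \<Longrightarrow> z \<le> a n \<Longrightarrow> \<exists>i<n. a i < z \<and> z \<le> a (Suc i)"
  by (induction n) (auto, metis less_Suc_eq not_less)

context
  fixes f :: "real \<Rightarrow> 'a::real_normed_vector" and a :: "nat \<Rightarrow> real" and n :: nat
    and G :: "nat \<Rightarrow> real \<Rightarrow> 'a" and B C :: real
  assumes periodic: "\<And>x. f (x + 1) = f x"
    and a0: "a 0 = 0" and an: "a n = 1"
    and f_eq: "\<And>i x. i < n \<Longrightarrow> x \<in> {a i<..<a (Suc i)} \<Longrightarrow> f x = G i x"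
    and G_bounded: "\<And>i x. i < n \<Longrightarrow> x \<in> {a i..a (Suc i)} \<Longrightarrow> norm (G i x) \<le> B"
    and G_lipschitz: "\<And>i x y. i < n \<Longrightarrow> x \<in> {a i..a (Suc i)} \<Longrightarrow> y \<in> {a i..a (Suc i)} \<Longrightarrow>
      norm (G i x - G i y) \<le> C * \<bar>x - y\<bar>"
begin

lemma piecewise_right_estimate:
  "\<exists>\<delta>>0. \<exists>r. norm r \<le> B \<and> (\<forall>t. 0 < t \<and> t < \<delta> \<longrightarrow> norm (f (y + t) - r) \<le> C * t)"
proof -
  define z where "z = y - of_int \<lfloor>y\<rfloor>"
  have "0 \<le> z" "z < 1" unfolding z_def by linarith+
  then obtain i where i: "i < n" "a i \<le> z" "z < a (Suc i)"
    using interval_index_right[of a z n] a0 an by auto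
  have "norm (f (y + t) - G i z) \<le> C * t" if "0 < t" "t < a (Suc i) - z" for t
  proof -
    have "f (y + t) = f (z + t + of_int \<lfloor>y\<rfloor>)" by (simp add: z_def)
    also have "\<dots> = G i (z + t)"
      unfolding periodic_add_of_int[where h = f, OF periodic] using f_eq i that by auto
    finally show ?thesis using G_lipschitz[of i "z + t" z] i that by simp
  qed
  then show ?thesis
    using G_bounded[of i z] i by (intro exI[of _ "a (Suc i) - z"] exI[of _ "G i z"]) auto
qed

lemma piecewise_left_estimate:
  "\<exists>\<delta>>0. \<exists>l. norm l \<le> B \<and> (\<forall>t. 0 < t \<and> t < \<delta> \<longrightarrow> norm (f (y - t) - l) \<le> C * t)"
proof -
  define z where "z = y - of_int (\<lceil>y\<rceil> - 1)"
  have "0 < z" "z \<le> 1" unfolding z_def by linarith+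
  then obtain i where i: "i < n" "a i < z" "z \<le> a (Suc i)"
    using interval_index_left[of a z n] a0 an by auto
  have "norm (f (y - t) - G i z) \<le> C * t" if "0 < t" "t < z - a i" for t
  proof -
    have "f (y - t) = f (z - t + of_int (\<lceil>y\<rceil> - 1))" by (simp add: z_def)
    also have "\<dots> = G i (z - t)"
      unfolding periodic_add_of_int[where h = f, OF periodic] using f_eq i that by auto
    finally show ?thesis using G_lipschitz[of i "z - t" z] i that by simp
  qed
  then show ?thesis
    using G_bounded[of i z] i by (intro exI[of _ "z - a i"] exI[of _ "G i z"]) auto
qed

end

lemma tendsto_at_right_of_linear_bound:
  fixes f :: "real \<Rightarrow> 'a::real_normed_vector"
  assumes "0 < \<delta>" and bound: "\<And>t. 0 < t \<Longrightarrow> t < \<delta> \<Longrightarrow> norm (f (y + t) - r) \<le> C * t"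
  shows "(f \<longlongrightarrow> r) (at_right y)"
proof (rule LIM_zero_cancel, rule Lim_null_comparison)
  have "\<forall>\<^sub>F x in at_right y. x \<in> {y<..<y + \<delta>}"
    using eventually_at_right_real[of y "y + \<delta>"] assms(1) by simp
  then show "\<forall>\<^sub>F x in at_right y. norm (f x - r) \<le> C * (x - y)"
  proof (rule eventually_mono)
    fix x assume "x \<in> {y<..<y + \<delta>}"
    then show "norm (f x - r) \<le> C * (x - y)" using bound[of "x - y"] by simp
  qed
  have "((\<lambda>x. C * (x - y)) \<longlongrightarrow> C * (y - y)) (at_right y)"
    by (intro tendsto_intros)
  then show "((\<lambda>x. C * (x - y)) \<longlongrightarrow> 0) (at_right y)" by simp
qed

lemma tendsto_at_left_of_linear_bound:
  fixes f :: "real \<Rightarrow> 'a::real_normed_vector"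
  assumes "0 < \<delta>" and bound: "\<And>t. 0 < t \<Longrightarrow> t < \<delta> \<Longrightarrow> norm (f (y - t) - l) \<le> C * t"
  shows "(f \<longlongrightarrow> l) (at_left y)"
proof (rule LIM_zero_cancel, rule Lim_null_comparison)
  have "\<forall>\<^sub>F x in at_left y. x \<in> {y - \<delta><..<y}"
    using eventually_at_left_real[of "y - \<delta>" y] assms(1) by simp
  then show "\<forall>\<^sub>F x in at_left y. norm (f x - l) \<le> C * (y - x)"
  proof (rule eventually_mono)
    fix x assume "x \<in> {y - \<delta><..<y}"
    then show "norm (f x - l) \<le> C * (y - x)" using bound[of "y - x"] by simp
  qed
  have "((\<lambda>x. C * (y - x)) \<longlongrightarrow> C * (y - y)) (at_left y)"
    by (intro tendsto_intros)
  then show "((\<lambda>x. C * (y - x)) \<longlongrightarrow> 0) (at_left y)" by simp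
qed

lemma classD_local:
  assumes "classD f"
  obtains B where "\<And>y. \<exists>\<delta>>0. \<exists>C l r. norm l \<le> B \<and> norm r \<le> B \<and> f y = (l + r) / 2 \<and>
      (\<forall>t. 0 < t \<and> t < \<delta> \<longrightarrow> norm (f (y + t) - r) \<le> C * t \<and> norm (f (y - t) - l) \<le> C * t)"
proof -
  have periodic: "\<And>x. f (x + 1) = f x"
    and mid: "\<And>x. \<exists>l r. (f \<longlongrightarrow> l) (at_left x) \<and> (f \<longlongrightarrow> r) (at_right x) \<and> f x = (l + r) / 2"
    using assms by (auto simp: classD_def)
  obtain a n G B C where pieces: "a 0 = 0" "a n = 1"
    "\<And>i x. i < n \<Longrightarrow> x \<in> {a i<..<a (Suc i)} \<Longrightarrow> f x = G i x"
    "\<And>i x. i < n \<Longrightarrow> x \<in> {a i..a (Suc i)} \<Longrightarrow> norm (G i x) \<le> B"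
    "\<And>i x y. i < n \<Longrightarrow> x \<in> {a i..a (Suc i)} \<Longrightarrow> y \<in> {a i..a (Suc i)} \<Longrightarrow>
      norm (G i x - G i y) \<le> C * \<bar>x - y\<bar>"
    using assms unfolding classD_def by (elim conjE piecewise_C1_periodE) blast
  show ?thesis
  proof (rule that)
    fix y
    obtain \<delta>1 r where \<delta>1: "0 < \<delta>1" and r: "norm r \<le> B"
      and right: "\<And>t. 0 < t \<Longrightarrow> t < \<delta>1 \<Longrightarrow> norm (f (y + t) - r) \<le> C * t"
      using piecewise_right_estimate[of f a n G B C y, OF periodic pieces] by blast
    obtain \<delta>2 l where \<delta>2: "0 < \<delta>2" and l: "norm l \<le> B"
      and left: "\<And>t. 0 < t \<Longrightarrow> t < \<delta>2 \<Longrightarrow> norm (f (y - t) - l) \<le> C * t"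
      using piecewise_left_estimate[of f a n G B C y, OF periodic pieces] by blast
    obtain l' r' where l': "(f \<longlongrightarrow> l') (at_left y)" and r': "(f \<longlongrightarrow> r') (at_right y)"
      and "f y = (l' + r') / 2"
      using mid by blast
    moreover have "l' = l"
      by (rule tendsto_unique[OF _ l' tendsto_at_left_of_linear_bound[OF \<delta>2 left]]) simp
    moreover have "r' = r"
      by (rule tendsto_unique[OF _ r' tendsto_at_right_of_linear_bound[OF \<delta>1 right]]) simp
    ultimately show "\<exists>\<delta>>0. \<exists>C l r. norm l \<le> B \<and> norm r \<le> B \<and> f y = (l + r) / 2 \<and>
      (\<forall>t. 0 < t \<and> t < \<delta> \<longrightarrow> norm (f (y + t) - r) \<le> C * t \<and> norm (f (y - t) - l) \<le> C * t)"
      using \<delta>1 \<delta>2 l r left right by (intro exI[of _ "min \<delta>1 \<delta>2"] conjI exI[of _ C] exI[of _ l] exI[of _ r]) auto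
  qed
qed

section \<open>Dirichlet's theorem\<close>

lemma x_mult_cos_le_sin:
  assumes "0 \<le> x" "x \<le> pi"
  shows "x * cos x \<le> sin x"
proof -
  have "(\<lambda>x. sin x - x * cos x) 0 \<le> (\<lambda>x. sin x - x * cos x) x"
  proof (rule DERIV_nonneg_imp_nondecreasing[OF assms(1)])
    fix u assume "0 \<le> u" "u \<le> x"
    moreover have "((\<lambda>x. sin x - x * cos x) has_real_derivative (u * sin u)) (at u)"
      by (auto intro!: derivative_eq_intros)
    ultimately show "\<exists>y. ((\<lambda>x. sin x - x * cos x) has_real_derivative y) (at u) \<and> 0 \<le> y"
      using assms by (intro exI[of _ "u * sin u"]) (auto intro!: mult_nonneg_nonneg sin_ge_zero)
  qed
  then show ?thesis by simp
qed

lemma le_sin_pi_mult: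
  assumes "0 \<le> t" "t \<le> 1/2"
  shows "t \<le> sin (pi * t)"
proof (cases "t \<le> 1/3")
  case True
  have cos: "1/2 \<le> cos (pi * t)"
    using cos_monotone_0_pi_le[of "pi * t" "pi / 3"] assms True by (simp add: cos_60)
  have "2 * t \<le> pi * t" by (rule mult_right_mono) (use assms pi_gt3 in auto)
  then have "t \<le> pi * t * (1/2)" by simp
  also have "\<dots> \<le> pi * t * cos (pi * t)"
    by (rule mult_left_mono[OF cos]) (use assms in simp)
  also have "\<dots> \<le> sin (pi * t)" by (rule x_mult_cos_le_sin) (use assms in simp_all)
  finally show ?thesis .
next
  case False
  have "sin (pi / 3) \<le> sin (pi * t)"
    by (rule sin_monotone_2pi_le) (use False assms pi_gt_zero in \<open>auto simp: field_simps\<close>)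
  moreover have "1/2 \<le> sin (pi / 3)" by (simp add: sin_60)
  ultimately show ?thesis using assms by linarith
qed

lemma norm_divide_sin_pi_le:
  fixes \<phi> :: "'a::real_normed_vector"
  assumes "0 < t" "t \<le> 1/2" "norm \<phi> \<le> M" "t < \<delta> \<Longrightarrow> norm \<phi> \<le> C * t" "0 < \<delta>"
  shows "norm \<phi> / sin (pi * t) \<le> \<bar>C\<bar> + M / \<delta>"
proof -
  have M: "0 \<le> M" using assms(3) norm_ge_zero[of \<phi>] by linarith
  have "norm \<phi> / sin (pi * t) \<le> norm \<phi> / t"
    using assms(1,2) le_sin_pi_mult[of t] by (intro divide_left_mono) auto
  also have "\<dots> \<le> \<bar>C\<bar> + M / \<delta>"
  proof (cases "t < \<delta>")
    case True
    then have "norm \<phi> / t \<le> C" using assms(1,4) by (simp add: divide_le_eq mult.commute)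
    then show ?thesis using M assms(5) by (smt (verit) divide_nonneg_pos)
  next
    case False
    have "norm \<phi> / t \<le> M / t" using assms(1,3) by (simp add: divide_right_mono)
    also have "\<dots> \<le> M / \<delta>" using False assms(1,5) M by (intro divide_left_mono) auto
    finally show ?thesis by linarith
  qed
  finally show ?thesis .
qed

definition fourier_partial_sum :: "(real \<Rightarrow> complex) \<Rightarrow> nat \<Rightarrow> real \<Rightarrow> complex" where
  "fourier_partial_sum f K x = (\<Sum>k = - int K..int K. fourier_coeff f k * e (of_int k * x))"

lemma fourier_coeff_shift_has_integral:
  assumes periodic: "\<And>x. f (x + 1) = f x" and f: "bounded_measurable_on {0..1} f"
  shows "((\<lambda>t. f (y + t) * e (- of_int k * t)) has_integral fourier_coeff f k * e (of_int k * y)) {0..1}"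
proof -
  define h where "h s = f s * e (- of_int k * s) * e (of_int k * y)" for s
  have "h (x + 1) = h x" for x
    using periodic[of x] e_add_of_int[of "- of_int k * x" "- k"] by (simp add: h_def algebra_simps)
  moreover have "h integrable_on {0..1}"
    unfolding h_def
    by (intro bounded_measurable_on_integrable bounded_measurable_on_mult f bounded_measurable_on_e_mult
        bounded_measurable_on_const) simp_all
  moreover have "integral {0..1} h = fourier_coeff f k * e (of_int k * y)"
    unfolding h_def fourier_coeff_def by (simp add: integral_mult_left)
  ultimately have "(h has_integral fourier_coeff f k * e (of_int k * y)) {y..y+1}"
    using periodic_has_integral_unit_interval by metis
  from has_integral_shift_real_ivl[OF this, of y]
  have "((\<lambda>t. h (t + y)) has_integral fourier_coeff f k * e (of_int k * y)) {0..1}" by simp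
  moreover have "h (t + y) = f (y + t) * e (- of_int k * t)" for t
    by (simp add: h_def e_add[symmetric] add.commute algebra_simps)
  ultimately show ?thesis by simp
qed

lemma fourier_partial_sum_has_integral:
  assumes "\<And>x. f (x + 1) = f x" "bounded_measurable_on {0..1} f"
  shows "((\<lambda>t. f (y + t) * dirichlet_kernel K t) has_integral fourier_partial_sum f K y) {0..1}"
proof -
  have "((\<lambda>t. \<Sum>k = - int K..int K. f (y + t) * e (- of_int k * t)) has_integral fourier_partial_sum f K y) {0..1}"
    unfolding fourier_partial_sum_def
    by (intro has_integral_sum finite_atLeastAtMost_int fourier_coeff_shift_has_integral assms)
  then show ?thesis by (simp add: dirichlet_kernel_def sum_distrib_left)
qed

lemma step_dirichlet_kernel_has_integral:
  "((\<lambda>t. (if t \<le> 1/2 then r else l) * dirichlet_kernel K t) has_integral (l + r) / 2) {0..1}"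
proof -
  have "((\<lambda>t. (if t \<le> 1/2 then r else l) * dirichlet_kernel K t) has_integral r * of_real (1/2)) {0..1/2}"
    by (rule has_integral_eq[OF _ has_integral_mult_right[OF has_integral_of_real[OF dirichlet_cos_sum_has_integral_halves(1)[of K]]]])
      (simp add: dirichlet_kernel_eq_cos_sum)
  moreover have "((\<lambda>t. (if t \<le> 1/2 then r else l) * dirichlet_kernel K t) has_integral l * of_real (1/2)) {1/2..1}"
    by (rule has_integral_spike_finite[of "{1/2}", OF _ _
          has_integral_mult_right[OF has_integral_of_real[OF dirichlet_cos_sum_has_integral_halves(2)[of K]]]])
      (auto simp: dirichlet_kernel_eq_cos_sum)
  ultimately have "((\<lambda>t. (if t \<le> 1/2 then r else l) * dirichlet_kernel K t) has_integral r * of_real (1/2) + l * of_real (1/2)) {0..1}"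
    by (rule has_integral_combine[rotated 2]) auto
  then show ?thesis by (simp add: field_simps)
qed

lemma dirichlet_quotient_bounded_measurable:
  fixes g :: "real \<Rightarrow> complex"
  assumes g: "g measurable_on {0..1}" and bounded: "\<And>t. t \<in> {0..1} \<Longrightarrow> norm (g t) \<le> B"
    and "0 < \<delta>"
    and right: "\<And>t. 0 < t \<Longrightarrow> t < \<delta> \<Longrightarrow> norm (g t - r) \<le> C * t"
    and left: "\<And>t. 0 < t \<Longrightarrow> t < \<delta> \<Longrightarrow> norm (g (1 - t) - l) \<le> C * t"
  shows "bounded_measurable_on {0..1} (\<lambda>t. (g t - (if t \<le> 1/2 then r else l)) * of_real (inverse (sin (pi * t))))"
proof (rule bounded_measurable_onI)
  have step: "(\<lambda>t::real. if t \<le> 1/2 then r else l) measurable_on {0..1}"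
    by (rule lebesgue_measurable_imp_measurable_on) (intro measurable_completion, measurable, simp)
  have inverse_sin: "(\<lambda>t. complex_of_real (inverse (sin (pi * t)))) measurable_on {0..1}"
    by (rule lebesgue_measurable_imp_measurable_on) (intro measurable_completion, measurable, simp)
  show "(\<lambda>t. (g t - (if t \<le> 1/2 then r else l)) * of_real (inverse (sin (pi * t)))) measurable_on {0..1}"
    by (rule measurable_on_bilinear[OF bilinear_times measurable_on_diff[OF g step] inverse_sin])
  define M where "M = \<bar>C\<bar> + (B + norm r + norm l) / \<delta>"
  have "0 \<le> B" using order_trans[OF norm_ge_zero bounded[of 0]] by simp
  then have M: "0 \<le> M"
    unfolding M_def using \<open>0 < \<delta>\<close> by (intro add_nonneg_nonneg abs_ge_zero divide_nonneg_pos) auto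
  fix t :: real assume t: "t \<in> {0..1}"
  have "0 \<le> sin (pi * t)" using t by (intro sin_ge_zero) auto
  then have norm_eq: "norm (z * of_real (inverse (sin (pi * t)))) = norm z / sin (pi * t)" for z :: complex
    by (simp add: norm_mult norm_inverse divide_inverse)
  consider "t = 0 \<or> t = 1" | "0 < t \<and> t \<le> 1/2" | "1/2 < t \<and> t < 1" using t by force
  then show "norm ((g t - (if t \<le> 1/2 then r else l)) * of_real (inverse (sin (pi * t)))) \<le> M"
  proof cases
    case 1
    then show ?thesis using M by auto
  next
    case 2
    have "norm (g t - r) / sin (pi * t) \<le> M"
      unfolding M_def
    proof (rule norm_divide_sin_pi_le)
      show "norm (g t - r) \<le> B + norm r + norm l"
        using bounded[OF t] norm_triangle_ineq4[of "g t" r] norm_ge_zero[of l] by linarith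
      show "norm (g t - r) \<le> C * t" if "t < \<delta>" using right 2 that by simp
    qed (use 2 \<open>0 < \<delta>\<close> in simp_all)
    then show ?thesis using norm_eq 2 by simp
  next
    case 3
    have "sin (pi * t) = sin (pi - pi * t)" by simp
    also have "pi - pi * t = pi * (1 - t)" by (simp add: algebra_simps)
    finally have sin_eq: "sin (pi * t) = sin (pi * (1 - t))" .
    have "norm (g t - l) / sin (pi * (1 - t)) \<le> M"
      unfolding M_def
    proof (rule norm_divide_sin_pi_le)
      show "norm (g t - l) \<le> B + norm r + norm l"
        using bounded[OF t] norm_triangle_ineq4[of "g t" l] norm_ge_zero[of r] by linarith
      show "norm (g t - l) \<le> C * (1 - t)" if "1 - t < \<delta>"
        using left[of "1 - t"] 3 that by simp
    qed (use 3 \<open>0 < \<delta>\<close> in simp_all)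
    then show ?thesis using norm_eq 3 sin_eq by simp
  qed
qed

lemma fourier_partial_sum_diff_has_integral:
  assumes "\<And>x. f (x + 1) = f x" "bounded_measurable_on {0..1} f"
  shows "((\<lambda>t. (f (y + t) - (if t \<le> 1/2 then r else l)) * dirichlet_kernel K t)
    has_integral fourier_partial_sum f K y - (l + r) / 2) {0..1}"
  using has_integral_diff[OF fourier_partial_sum_has_integral[OF assms] step_dirichlet_kernel_has_integral]
  by (simp add: left_diff_distrib)

lemma measurable_on_periodic_shift:
  fixes f :: "real \<Rightarrow> complex"
  assumes "\<And>x. f (x + 1) = f x" "f integrable_on {0..1}"
  shows "(\<lambda>t. f (y + t)) measurable_on {0..1}"
proof -
  have "((\<lambda>t. f (t + y)) has_integral integral {0..1} f) {0..1}"
    using has_integral_shift_real_ivl[OF periodic_has_integral_unit_interval[OF assms, of y], of y]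
    by simp
  then have "(\<lambda>t. f (y + t)) integrable_on {0..1}"
    by (auto simp: integrable_on_def add.commute)
  then show ?thesis
    using integrable_imp_measurable by (simp add: measurable_on_iff_borel_measurable)
qed

text \<open>Since \<open>sin(\<pi>t) D\<^sub>K(t) = (e((K+1/2)t) - e(-(K+1/2)t)) / 2i\<close>, this is the Riemann-Lebesgue
  lemma for \<open>\<psi>(t) e(\<plusminus>t/2)\<close>.\<close>

lemma integral_sin_dirichlet_kernel_tendsto_zero:
  assumes \<psi>: "bounded_measurable_on {0..1} \<psi>"
  shows "(\<lambda>K. integral {0..1} (\<lambda>t. \<psi> t * of_real (sin (pi * t)) * dirichlet_kernel K t)) \<longlonglongrightarrow> 0"
proof -
  define X1 where "X1 t = \<psi> t * e ((1/2) * t)" for t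
  define X2 where "X2 t = \<psi> t * e ((-1/2) * t)" for t
  have X1: "bounded_measurable_on {0..1} (\<lambda>t. X1 t * e (of_int 1 * real K * t))"
    and X2: "bounded_measurable_on {0..1} (\<lambda>t. X2 t * e (of_int (-1) * real K * t))" for K
    unfolding X1_def X2_def by (intro bounded_measurable_on_mult \<psi> bounded_measurable_on_e_mult)+
  have integrand: "\<psi> t * of_real (sin (pi * t)) * dirichlet_kernel K t
      = (X1 t * e (of_int 1 * real K * t) - X2 t * e (of_int (-1) * real K * t)) / (2 * \<i>)" for t K
  proof -
    have "\<psi> t * of_real (sin (pi * t)) * dirichlet_kernel K t
        = \<psi> t * (e ((real K + 1/2) * t) - e (- ((real K + 1/2) * t))) / (2 * \<i>)"
      by (simp add: dirichlet_kernel_mult_sin mult.assoc)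
    also have "e ((real K + 1/2) * t) = e ((1/2) * t) * e (of_int 1 * real K * t)"
      by (simp add: e_add[symmetric] algebra_simps)
    also have "e (- ((real K + 1/2) * t)) = e ((-1/2) * t) * e (of_int (-1) * real K * t)"
      by (simp add: e_add[symmetric] algebra_simps)
    finally show ?thesis by (simp add: X1_def X2_def algebra_simps)
  qed
  have "integral {0..1} (\<lambda>t. \<psi> t * of_real (sin (pi * t)) * dirichlet_kernel K t)
      = (integral {0..1} (\<lambda>t. X1 t * e (of_int 1 * real K * t))
          - integral {0..1} (\<lambda>t. X2 t * e (of_int (-1) * real K * t))) / (2 * \<i>)" for K
  proof -
    have "(\<lambda>t. X1 t * e (of_int 1 * real K * t)) integrable_on {0..1}"
      and "(\<lambda>t. X2 t * e (of_int (-1) * real K * t)) integrable_on {0..1}"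
      using bounded_measurable_on_integrable[OF _ X1] bounded_measurable_on_integrable[OF _ X2] by simp_all
    from has_integral_divide[OF has_integral_diff[OF this[THEN integrable_integral]], of "2 * \<i>"]
    show ?thesis by (simp only: integrand integral_unique)
  qed
  moreover have "(\<lambda>K. (integral {0..1} (\<lambda>t. X1 t * e (of_int 1 * real K * t))
      - integral {0..1} (\<lambda>t. X2 t * e (of_int (-1) * real K * t))) / (2 * \<i>)) \<longlonglongrightarrow> (0 - 0) / (2 * \<i>)"
    using X1[of 0] X2[of 0] by (intro tendsto_intros riemann_lebesgue_e) (auto simp: X1_def X2_def)
  ultimately show ?thesis by simp
qed

theorem fourier_partial_sum_tendsto:
  fixes f :: "real \<Rightarrow> complex"
  assumes periodic: "\<And>x. f (x + 1) = f x" and int: "f integrable_on {0..1}"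
    and bounded: "\<And>x. norm (f x) \<le> B" and "0 < \<delta>"
    and right: "\<And>t. 0 < t \<Longrightarrow> t < \<delta> \<Longrightarrow> norm (f (y + t) - r) \<le> C * t"
    and left: "\<And>t. 0 < t \<Longrightarrow> t < \<delta> \<Longrightarrow> norm (f (y - t) - l) \<le> C * t"
    and mid: "f y = (l + r) / 2"
  shows "(\<lambda>K. fourier_partial_sum f K y) \<longlonglongrightarrow> f y"
proof -
  define c where "c t = (if t \<le> 1/2 then r else l)" for t :: real
  define \<psi> where "\<psi> t = (f (y + t) - c t) * of_real (inverse (sin (pi * t)))" for t
  have f: "bounded_measurable_on {0..1} f"
    using integrable_imp_measurable[OF int] bounded
    by (intro bounded_measurable_onI) (auto simp: measurable_on_iff_borel_measurable)
  have \<psi>: "bounded_measurable_on {0..1} \<psi>"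
    unfolding \<psi>_def c_def
  proof (rule dirichlet_quotient_bounded_measurable[OF measurable_on_periodic_shift[OF periodic int] _ \<open>0 < \<delta>\<close>])
    show "norm (f (y + t)) \<le> B" for t by (rule bounded)
    show "norm (f (y + t) - r) \<le> C * t" if "0 < t" "t < \<delta>" for t using right that .
    show "norm (f (y + (1 - t)) - l) \<le> C * t" if "0 < t" "t < \<delta>" for t
      using left[OF that] periodic[of "y - t"] by (simp add: algebra_simps)
  qed
  have "integral {0..1} (\<lambda>t. \<psi> t * of_real (sin (pi * t)) * dirichlet_kernel K t)
      = fourier_partial_sum f K y - f y" for K
  proof (rule integral_unique)
    have known: "((\<lambda>t. (f (y + t) - c t) * dirichlet_kernel K t) has_integral fourier_partial_sum f K y - f y) {0..1}"
      unfolding c_def mid by (rule fourier_partial_sum_diff_has_integral[OF periodic f])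
    have spike: "\<psi> t * of_real (sin (pi * t)) * dirichlet_kernel K t = (f (y + t) - c t) * dirichlet_kernel K t"
      if "t \<in> {0..1} - {0, 1}" for t
    proof -
      have "sin (pi * t) \<noteq> 0" using that by (intro order.strict_implies_not_eq[symmetric] sin_gt_zero) auto
      then show ?thesis by (simp add: \<psi>_def field_simps)
    qed
    show "((\<lambda>t. \<psi> t * of_real (sin (pi * t)) * dirichlet_kernel K t)
        has_integral fourier_partial_sum f K y - f y) {0..1}"
      by (rule has_integral_spike_finite[of "{0, 1}", OF _ spike known]) simp
  qed
  then show ?thesis
    using integral_sin_dirichlet_kernel_tendsto_zero[OF \<psi>] by (simp add: LIM_zero_iff)
qed

corollary classD_fourier_partial_sum_tendsto:
  assumes "classD f"
  shows "(\<lambda>K. fourier_partial_sum f K y) \<longlonglongrightarrow> f y"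
proof -
  obtain B where local: "\<And>y. \<exists>\<delta>>0. \<exists>C l r. norm l \<le> B \<and> norm r \<le> B \<and> f y = (l + r) / 2 \<and>
      (\<forall>t. 0 < t \<and> t < \<delta> \<longrightarrow> norm (f (y + t) - r) \<le> C * t \<and> norm (f (y - t) - l) \<le> C * t)"
    using classD_local[OF assms] by blast
  have "norm (f x) \<le> B" for x
  proof -
    obtain l r where "norm l \<le> B" "norm r \<le> B" and fx: "f x = (l + r) / 2"
      using local[of x] by blast
    moreover have "norm (f x) = norm (l + r) / 2" unfolding fx by (simp add: norm_divide)
    ultimately show ?thesis using norm_triangle_ineq[of l r] by linarith
  qed
  moreover obtain \<delta> C l r where "0 < \<delta>" "f y = (l + r) / 2"
    "\<And>t. 0 < t \<Longrightarrow> t < \<delta> \<Longrightarrow> norm (f (y + t) - r) \<le> C * t \<and> norm (f (y - t) - l) \<le> C * t"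
    using local[of y] by blast
  ultimately show ?thesis
    using assms unfolding classD_def by (intro fourier_partial_sum_tendsto[where B = B and \<delta> = \<delta>]) auto
qed

section \<open>The solution at rational times\<close>

lemma poly_cong_mod: "(a::int) mod m = b mod m \<Longrightarrow> poly p a mod m = poly p b mod m"
proof (induction p)
  case (pCons c p)
  then have "(a * poly p a) mod m = (b * poly p b) mod m"
    by (intro mod_mult_cong) simp_all
  then have "(c + a * poly p a) mod m = (c + b * poly p b) mod m"
    by (rule mod_add_cong[OF refl])
  then show ?case by simp
qed simp

lemma sum_e_mult_div:
  assumes "q > 0"
  shows "(\<Sum>v\<in>{0..<int q}. e (of_int (v * m) / of_nat q)) = (if int q dvd m then of_nat q else 0)"
proof -
  define z where "z = e (of_int m / of_nat q)"
  have "{0..<int q} = int ` {..<q}"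
    using image_int_atLeastLessThan[of 0 q] by (simp add: lessThan_atLeast0)
  then have "(\<Sum>v\<in>{0..<int q}. e (of_int (v * m) / of_nat q)) = (\<Sum>v<q. e (of_int (int v * m) / of_nat q))"
    by (simp add: sum.reindex)
  also have "\<dots> = (\<Sum>v<q. z ^ v)"
    unfolding z_def e_of_nat_mult[symmetric] by (simp add: algebra_simps)
  also have "\<dots> = (if int q dvd m then of_nat q else 0)"
  proof (cases "int q dvd m")
    case True
    then have "z = 1" using assms by (auto simp: z_def)
    then show ?thesis using True by simp
  next
    case False
    have "z \<noteq> 1"
    proof
      assume "z = 1"
      then obtain j where "of_int m / of_nat q = (of_int j :: real)"
        unfolding z_def e_eq_1_iff by (auto elim: Ints_cases)
      then have "of_int m = (of_int (j * int q) :: real)" using assms by (simp add: field_simps)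
      then have "m = j * int q" by linarith
      then show False using False by simp
    qed
    moreover have "z ^ q = 1"
      unfolding z_def e_of_nat_mult[symmetric] using assms by simp
    ultimately show ?thesis using False by (simp add: sum_gp_strict)
  qed
  finally show ?thesis .
qed

text \<open>Finite Fourier inversion of \<open>k \<mapsto> e(u P(k)/q)\<close>, which depends only on \<open>k mod q\<close>.\<close>

lemma e_poly_div_eq_gauss_sum:
  assumes q: "q > 0"
  shows "e (of_int u / of_nat q * of_int (poly P k)) =
         (1 / of_nat q) * (\<Sum>v\<in>{0..<int q}. G P u v q * e (of_int k * (of_int v / of_nat q)))"
proof -
  have "(\<Sum>v\<in>{0..<int q}. G P u v q * e (of_int k * (of_int v / of_nat q)))
      = (\<Sum>v\<in>{0..<int q}. \<Sum>w\<in>{0..<int q}.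
          e (of_int (u * poly P w) / of_nat q) * e (of_int (v * (k - w)) / of_nat q))"
    unfolding G_def sum_distrib_right
    by (intro sum.cong refl) (simp add: e_add[symmetric] add_divide_distrib[symmetric] algebra_simps)
  also have "\<dots> = (\<Sum>w\<in>{0..<int q}. e (of_int (u * poly P w) / of_nat q) *
      (\<Sum>v\<in>{0..<int q}. e (of_int (v * (k - w)) / of_nat q)))"
    by (subst sum.swap) (simp add: sum_distrib_left)
  also have "\<dots> = (\<Sum>w\<in>{0..<int q}. if w = k mod int q then of_nat q * e (of_int u / of_nat q * of_int (poly P k)) else 0)"
  proof (intro sum.cong refl)
    fix w assume w: "w \<in> {0..<int q}"
    have "int q dvd (k - w) \<longleftrightarrow> k mod int q = w mod int q" by (simp add: mod_eq_dvd_iff)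
    also have "w mod int q = w" using w by simp
    finally have dvd_iff: "int q dvd (k - w) \<longleftrightarrow> w = k mod int q" by auto
    have "e (of_int (u * poly P w) / of_nat q) = e (of_int u / of_nat q * of_int (poly P k))"
      if "w = k mod int q"
    proof -
      have "poly P w mod int q = poly P k mod int q"
        by (rule poly_cong_mod) (simp add: that)
      then have "int q dvd (poly P w - poly P k)" by (simp add: mod_eq_dvd_iff)
      then obtain j where j: "poly P w = poly P k + int q * j"
        by (metis add.commute diff_add_cancel dvdE)
      have "(of_int (u * poly P w) / of_nat q :: real) = of_int u / of_nat q * of_int (poly P k) + of_int (u * j)"
        using q unfolding j by (simp add: field_simps)
      then show ?thesis by (simp only: e_add_of_int)
    qed
    then show "e (of_int (u * poly P w) / of_nat q) * (\<Sum>v\<in>{0..<int q}. e (of_int (v * (k - w)) / of_nat q)) =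
        (if w = k mod int q then of_nat q * e (of_int u / of_nat q * of_int (poly P k)) else 0)"
      using dvd_iff sum_e_mult_div[OF q, of "k - w"] by (auto simp: mult.commute)
  qed
  also have "\<dots> = of_nat q * e (of_int u / of_nat q * of_int (poly P k))"
    using q by (simp add: sum.delta')
  finally show ?thesis using q by simp
qed

lemma U_partial_rational:
  assumes "q > 0"
  shows "U_partial P f (of_int u / of_nat q) x K =
    (1 / of_nat q) * (\<Sum>v\<in>{0..<int q}. G P u v q * fourier_partial_sum f K (x + of_int v / of_nat q))"
proof -
  have "U_partial P f (of_int u / of_nat q) x K =
      (\<Sum>k = - int K..int K. \<Sum>v\<in>{0..<int q}.
         (1 / of_nat q) * (G P u v q * (fourier_coeff f k * e (of_int k * (x + of_int v / of_nat q)))))"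
    unfolding U_partial_def e_add e_poly_div_eq_gauss_sum[OF assms]
    by (intro sum.cong refl) (simp add: sum_distrib_left sum_distrib_right distrib_left e_add algebra_simps)
  also have "\<dots> = (1 / of_nat q) * (\<Sum>v\<in>{0..<int q}. G P u v q * fourier_partial_sum f K (x + of_int v / of_nat q))"
    by (subst sum.swap) (simp add: fourier_partial_sum_def sum_distrib_left)
  finally show ?thesis .
qed

lemma piecewise_constant_shift:
  assumes "piecewise_constant g"
  shows "piecewise_constant (\<lambda>x. g (x + c))"
  unfolding piecewise_constant_def
proof (intro allI)
  fix a b :: real
  obtain S where S: "finite S"
    "\<And>x y. a + c \<le> x \<and> x \<le> y \<and> y \<le> b + c \<and> {x..y} \<inter> S = {} \<Longrightarrow> g x = g y"
    using assms unfolding piecewise_constant_def by meson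
  have "g (x + c) = g (y + c)"
    if xy: "a \<le> x \<and> x \<le> y \<and> y \<le> b \<and> {x..y} \<inter> (\<lambda>s. s - c) ` S = {}" for x y
  proof (rule S(2))
    have "s - c \<notin> {x..y}" if "s \<in> S" for s
      using xy that by blast
    then have "{x + c..y + c} \<inter> S = {}" by fastforce
    then show "a + c \<le> x + c \<and> x + c \<le> y + c \<and> y + c \<le> b + c \<and> {x + c..y + c} \<inter> S = {}"
      using xy by simp
  qed
  then show "\<exists>S. finite S \<and> (\<forall>x y. a \<le> x \<and> x \<le> y \<and> y \<le> b \<and> {x..y} \<inter> S = {} \<longrightarrow> g (x + c) = g (y + c))"
    using S(1) by (intro exI[of _ "(\<lambda>s. s - c) ` S"]) auto
qed

lemma piecewise_constant_add:
  assumes "piecewise_constant g" "piecewise_constant h"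
  shows "piecewise_constant (\<lambda>x. g x + h x)"
  unfolding piecewise_constant_def
proof (intro allI)
  fix a b :: real
  obtain S where S: "finite S" "\<And>x y. a \<le> x \<and> x \<le> y \<and> y \<le> b \<and> {x..y} \<inter> S = {} \<Longrightarrow> g x = g y"
    using assms(1) unfolding piecewise_constant_def by meson
  obtain T where T: "finite T" "\<And>x y. a \<le> x \<and> x \<le> y \<and> y \<le> b \<and> {x..y} \<inter> T = {} \<Longrightarrow> h x = h y"
    using assms(2) unfolding piecewise_constant_def by meson
  have "g x + h x = g y + h y" if "a \<le> x \<and> x \<le> y \<and> y \<le> b \<and> {x..y} \<inter> (S \<union> T) = {}" for x y
    using S(2)[of x y] T(2)[of x y] that by (simp add: Int_Un_distrib)
  then show "\<exists>S. finite S \<and> (\<forall>x y. a \<le> x \<and> x \<le> y \<and> y \<le> b \<and> {x..y} \<inter> S = {} \<longrightarrow> g x + h x = g y + h y)"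
    using S(1) T(1) by (intro exI[of _ "S \<union> T"]) auto
qed

lemma piecewise_constant_cmult:
  assumes "piecewise_constant g"
  shows "piecewise_constant (\<lambda>x. c * g x)"
  using assms unfolding piecewise_constant_def by metis

lemma piecewise_constant_sum:
  assumes "\<And>i. i \<in> A \<Longrightarrow> piecewise_constant (g i)"
  shows "piecewise_constant (\<lambda>x. \<Sum>i\<in>A. g i x)"
  using assms
proof (induction A rule: infinite_finite_induct)
  case (insert a A)
  then show ?case by (simp add: piecewise_constant_add)
qed (auto simp: piecewise_constant_def)

theorem theorem1p4:
  fixes P :: "int poly" and f :: "real \<Rightarrow> complex"
  assumes "classD f"
  shows "(\<forall>(u::int) (q::nat) (x::real). q > 0 \<and> coprime u (int q) \<longrightarrow>
            (U_partial P f (of_int u / of_nat q) x \<longlonglongrightarrow>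
               (1 / of_nat q) * (\<Sum>v\<in>{0..<int q}. G P u v q * f (x + of_int v / of_nat q))))
         \<and> (piecewise_constant (U P f 0) \<longrightarrow> (\<forall>t\<in>\<rat>. piecewise_constant (U P f t)))"
proof -
  have limit: "U_partial P f (of_int u / of_nat q) x \<longlonglongrightarrow>
      (1 / of_nat q) * (\<Sum>v\<in>{0..<int q}. G P u v q * f (x + of_int v / of_nat q))"
    if "q > 0" for u q x
    unfolding U_partial_rational[OF that]
    by (intro tendsto_intros classD_fourier_partial_sum_tendsto assms)
  then have U_rational: "U P f (of_int u / of_nat q) =
      (\<lambda>x. (1 / of_nat q) * (\<Sum>v\<in>{0..<int q}. G P u v q * f (x + of_int v / of_nat q)))"
    if "q > 0" for u q
    using that by (auto simp: U_def fun_eq_iff intro: limI)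
  have "U P f 0 = f"
  proof -
    have "{0..<int 1} = {0}" by auto
    then show ?thesis using U_rational[of 1 0] by (simp add: G_def)
  qed
  moreover have "piecewise_constant (U P f t)" if "piecewise_constant f" "t \<in> \<rat>" for t
  proof -
    obtain a b where "0 < b" "t = of_int a / of_int b"
      using \<open>t \<in> \<rat>\<close> by (rule Rats_cases') blast
    then have "U P f t = (\<lambda>x. (1 / of_nat (nat b)) *
        (\<Sum>v\<in>{0..<int (nat b)}. G P a v (nat b) * f (x + of_int v / of_nat (nat b))))"
      using U_rational[of "nat b" a] by simp
    then show ?thesis
      by (simp only:) (intro piecewise_constant_cmult piecewise_constant_sum piecewise_constant_shift that(1))
  qed
  ultimately show ?thesis using limit by auto
qed

end
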